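(* Let $T$ be a nonempty tree. Then $\pi(T)=\nu(T)+1$. Equivalently, $T$ has nullity $m$ if and only if a minimal partition of $T$ into always solvable subtrees has exactly $m+1$ parts.
   Context: For a finite simple graph $G$ with vertex set $\{v_1,\dots,v_n\}$, the closed adjacency matrix $N(G)$ is the $n\times n$ matrix over $\mathbb{Z}_2$ whose $(i,j)$ entry is $1$ iff $i=j$ or $v_i$ is adjacent to $v_j$. The nullity is $\nu(G):=\dim\operatorname{Ker}(N(G))$ over $\mathbb{Z}_2$, and $G$ is always solvable if $\nu(G)=0$. A partition of a tree $T$ into always solvable subtrees is a set $\{T_1,\dots,T_k\}$ of subtrees (connected induced subgraphs) of $T$ whose vertex sets are pairwise disjoint with union $V(T)$, each $T_i$ being always solvable (such partitions exist, e.g. into single vertices, since $K_1$ is always solvable). $\pi(T)$ denotes the minimum cardinality $k$ of such a partition. *)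

theory Defs
  imports "HOL-Library.Z2" "Jordan_Normal_Form.Matrix_Kernel"
begin

text \<open>A finite simple graph is given by a finite vertex set V and an
  irreflexive symmetric adjacency relation E (only its restriction to V matters).
  Vertices are enumerated v_1,...,v_n in increasing order (needs linorder);
  the nullity does not depend on this choice.\<close>

definition simple_graph :: "'a set \<Rightarrow> ('a \<Rightarrow> 'a \<Rightarrow> bool) \<Rightarrow> bool" where
  "simple_graph V E \<longleftrightarrow> finite V \<and> (\<forall>x\<in>V. \<not> E x x) \<and> (\<forall>x\<in>V. \<forall>y\<in>V. E x y \<longrightarrow> E y x)"

definition closed_adj_matrix :: "'a::linorder set \<Rightarrow> ('a \<Rightarrow> 'a \<Rightarrow> bool) \<Rightarrow> bit mat" where
  "closed_adj_matrix V E =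
     (let vs = sorted_list_of_set V; n = length vs in
      mat n n (\<lambda>(i, j). if i = j \<or> E (vs ! i) (vs ! j) then 1 else 0))"

definition nullity :: "'a::linorder set \<Rightarrow> ('a \<Rightarrow> 'a \<Rightarrow> bool) \<Rightarrow> nat" where
  "nullity V E = kernel_dim (closed_adj_matrix V E)"

definition always_solvable :: "'a::linorder set \<Rightarrow> ('a \<Rightarrow> 'a \<Rightarrow> bool) \<Rightarrow> bool" where
  "always_solvable V E \<longleftrightarrow> nullity V E = 0"

definition connected_graph :: "'a set \<Rightarrow> ('a \<Rightarrow> 'a \<Rightarrow> bool) \<Rightarrow> bool" where
  "connected_graph S E \<longleftrightarrow> S \<noteq> {} \<and>
     (\<forall>x\<in>S. \<forall>y\<in>S. (\<lambda>u v. u \<in> S \<and> v \<in> S \<and> E u v)\<^sup>*\<^sup>* x y)"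

definition is_cycle :: "'a set \<Rightarrow> ('a \<Rightarrow> 'a \<Rightarrow> bool) \<Rightarrow> 'a list \<Rightarrow> bool" where
  "is_cycle S E xs \<longleftrightarrow> length xs \<ge> 3 \<and> distinct xs \<and> set xs \<subseteq> S \<and>
     (\<forall>i. Suc i < length xs \<longrightarrow> E (xs ! i) (xs ! Suc i)) \<and> E (last xs) (hd xs)"

definition tree :: "'a set \<Rightarrow> ('a \<Rightarrow> 'a \<Rightarrow> bool) \<Rightarrow> bool" where
  "tree S E \<longleftrightarrow> connected_graph S E \<and> \<not> (\<exists>xs. is_cycle S E xs)"

definition AS_partition :: "'a::linorder set \<Rightarrow> ('a \<Rightarrow> 'a \<Rightarrow> bool) \<Rightarrow> 'a set set \<Rightarrow> bool" where
  "AS_partition V E P \<longleftrightarrow> finite P \<and> \<Union>P = V \<and>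
     (\<forall>A\<in>P. \<forall>B\<in>P. A \<noteq> B \<longrightarrow> A \<inter> B = {}) \<and>
     (\<forall>A\<in>P. A \<subseteq> V \<and> connected_graph A E \<and> always_solvable A E)"

definition pi_partition :: "'a::linorder set \<Rightarrow> ('a \<Rightarrow> 'a \<Rightarrow> bool) \<Rightarrow> nat" where
  "pi_partition V E = (LEAST k. \<exists>P. AS_partition V E P \<and> card P = k)"

end

theory Submission
  imports Defs "HOL-Library.FuncSet" "HOL-Library.Transitive_Closure_Table"
begin

text \<open>Over GF(2) the nullity is read off from the number of kernel vectors. Cut a tree T at
  an edge uv into the subtrees T_u and T_v containing u and v. A kernel vector x of T restricts
  to a solution of N(T_u) y = x(v) e_u on T_u, and symmetrically on T_v; counting gives
  \<nu>(T) \<le> \<nu>(T_u) + \<nu>(T_v) + 1. If some kernel vector is 1 at both u and v, then e_u lies in the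
  image of the symmetric matrix N(T_u), so every kernel vector of T_u vanishes at u (likewise
  at v); kernel vectors of both sides then extend by zero, and equality holds.

  The lower bound \<nu>(T) + 1 \<le> \<pi>(T) follows by induction: a partition other than {T} has a
  tree edge between two of its parts, and cutting there splits the partition. For the upper
  bound, if \<nu>(T) > 0 pick a kernel vector x and a vertex a with x(a) = 1; since the
  closed-neighbourhood sum at a vanishes, some neighbour b has x(b) = 1. Cutting at ab gives
  equality, and joining optimal partitions of the two sides gives at most \<nu>(T) + 1 parts.\<close>

section \<open>Kernels of closed adjacency matrices over GF(2)\<close>

text \<open>The library rewrites \<open>+\<close> and \<open>*\<close> on \<^typ>\<open>bit\<close> into bit operations, which hides the field structure.\<close>
declare add_bit_eq_xor [simp del] mult_bit_eq_and [simp del]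

lemma UNIV_bit: "(UNIV :: bit set) = {0, 1}"
  by (auto intro: bit.exhaust)

lemma bit_add_self [simp]: "a + a = (0 :: bit)"
  by (cases a) (simp_all flip: one_add_one)

lemma bit_add_eq_0_iff: "a + b = (0 :: bit) \<longleftrightarrow> a = b"
  by (cases a; cases b) (simp_all flip: one_add_one)

lemma card_mat_kernel:
  fixes A :: "'a::field mat"
  assumes A: "A \<in> carrier_mat nr nc"
  shows "card (mat_kernel A) = card (UNIV :: 'a set) ^ kernel_dim A"
proof -
  interpret K: kernel nr nc A by (unfold_locales, rule A)
  obtain B where fB: "finite B" and bB: "K.basis B"
    using kernel_basis_exists[OF A] by blast
  have BK: "B \<subseteq> mat_kernel A"
    using bB unfolding K.Ker.basis_def by auto
  have unique: "\<exists>!c. c \<in> B \<rightarrow>\<^sub>E UNIV \<and> K.lincomb c B = v" if "v \<in> mat_kernel A" for v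
    using K.Ker.basis_criterion[OF fB BK] bB that by simp
  have "bij_betw (\<lambda>c. K.lincomb c B) (B \<rightarrow>\<^sub>E UNIV) (mat_kernel A)"
  proof (rule bij_betwI')
    show "K.lincomb c B \<in> mat_kernel A" for c
      using K.Ker.lincomb_closed[OF BK] by auto
    then show "K.lincomb c B = K.lincomb d B \<longleftrightarrow> c = d"
      if "c \<in> B \<rightarrow>\<^sub>E UNIV" "d \<in> B \<rightarrow>\<^sub>E UNIV" for c d
      using unique that by metis
    show "\<exists>c \<in> B \<rightarrow>\<^sub>E UNIV. v = K.lincomb c B" if "v \<in> mat_kernel A" for v
      using unique[OF that] by metis
  qed
  then have "card (mat_kernel A) = card (UNIV :: 'a set) ^ card B"
    by (simp add: bij_betw_same_card[symmetric] card_funcsetE[OF fB])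
  then show ?thesis
    using K.Ker.dim_basis[OF fB bB] by simp
qed

definition closed_nbhd :: "'a set \<Rightarrow> ('a \<Rightarrow> 'a \<Rightarrow> bool) \<Rightarrow> 'a \<Rightarrow> 'a set" where
  "closed_nbhd S E a = {b \<in> S. b = a \<or> E a b}"

text \<open>The kernel of the closed adjacency matrix, with vectors indexed by the vertices
  themselves instead of their positions in \<^term>\<open>sorted_list_of_set S\<close>.\<close>
definition null_space :: "'a set \<Rightarrow> ('a \<Rightarrow> 'a \<Rightarrow> bool) \<Rightarrow> ('a \<Rightarrow> bit) set" where
  "null_space S E =
     {x. (\<forall>a. a \<notin> S \<longrightarrow> x a = 0) \<and> (\<forall>a\<in>S. sum x (closed_nbhd S E a) = 0)}"

lemma closed_nbhd_subset: "closed_nbhd S E a \<subseteq> S"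
  unfolding closed_nbhd_def by auto

lemma finite_closed_nbhd: "finite S \<Longrightarrow> finite (closed_nbhd S E a)"
  using closed_nbhd_subset finite_subset by metis

lemma sum_closed_nbhd_eq:
  "finite S \<Longrightarrow> sum x (closed_nbhd S E a) = (\<Sum>b\<in>S. if b = a \<or> E a b then x b else 0)"
  unfolding closed_nbhd_def by (simp add: sum.inter_filter)

lemma closed_adj_matrix_mult_vec:
  fixes S :: "'a::linorder set"
  defines "vs \<equiv> sorted_list_of_set S"
  assumes "finite S" and "i < card S"
  shows "(closed_adj_matrix S E *\<^sub>v vec (card S) (\<lambda>j. x (vs ! j))) $ i
         = sum x (closed_nbhd S E (vs ! i))"
proof -
  have len: "length vs = card S"
    unfolding vs_def by simp
  have nth: "bij_betw ((!) vs) {..<card S} S"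
    unfolding vs_def using assms(2) by (intro bij_betw_nth) simp_all
  then have "vs ! j = vs ! i \<longleftrightarrow> j = i" if "j < card S" for j
    using assms(3) that unfolding bij_betw_def inj_on_def by blast
  then have "(closed_adj_matrix S E *\<^sub>v vec (card S) (\<lambda>j. x (vs ! j))) $ i
      = (\<Sum>j<card S. if vs ! j = vs ! i \<or> E (vs ! i) (vs ! j) then x (vs ! j) else 0)"
    using assms(3) unfolding closed_adj_matrix_def Let_def vs_def[symmetric] len
    by (auto simp: mult_mat_vec_def scalar_prod_def row_def atLeast0LessThan intro!: sum.cong)
  also have "\<dots> = sum x (closed_nbhd S E (vs ! i))"
    using sum.reindex_bij_betw[OF nth, of "\<lambda>b. if b = vs ! i \<or> E (vs ! i) b then x b else 0"]
    by (simp add: sum_closed_nbhd_eq[OF assms(2)])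
  finally show ?thesis .
qed

lemma mem_mat_kernel_closed_adj_matrix_iff:
  fixes S :: "'a::linorder set"
  defines "vs \<equiv> sorted_list_of_set S"
  assumes fin: "finite S"
  shows "vec (card S) (\<lambda>j. x (vs ! j)) \<in> mat_kernel (closed_adj_matrix S E) \<longleftrightarrow>
    (\<forall>a\<in>S. sum x (closed_nbhd S E a) = 0)"
proof -
  have nth: "bij_betw ((!) vs) {..<card S} S"
    unfolding vs_def using fin by (intro bij_betw_nth) simp_all
  have "closed_adj_matrix S E \<in> carrier_mat (card S) (card S)"
    unfolding closed_adj_matrix_def Let_def by simp
  then have "vec (card S) (\<lambda>j. x (vs ! j)) \<in> mat_kernel (closed_adj_matrix S E) \<longleftrightarrow>
      (\<forall>i<card S. sum x (closed_nbhd S E (vs ! i)) = 0)"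
    using closed_adj_matrix_mult_vec[OF fin, of _ E x]
    unfolding mat_kernel_def vs_def by (auto simp: vec_eq_iff)
  also have "\<dots> \<longleftrightarrow> (\<forall>a\<in>(!) vs ` {..<card S}. sum x (closed_nbhd S E a) = 0)"
    by auto
  also have "\<dots> \<longleftrightarrow> (\<forall>a\<in>S. sum x (closed_nbhd S E a) = 0)"
    unfolding bij_betw_imp_surj_on[OF nth] ..
  finally show ?thesis .
qed

lemma bij_betw_null_space_mat_kernel:
  fixes S :: "'a::linorder set"
  defines "vs \<equiv> sorted_list_of_set S"
  assumes fin: "finite S"
  shows "bij_betw (\<lambda>x. vec (card S) (\<lambda>j. x (vs ! j))) (null_space S E) (mat_kernel (closed_adj_matrix S E))"
proof -
  define n where "n = card S"
  define N where "N = closed_adj_matrix S E"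
  define to_vec where "to_vec x = vec n (\<lambda>j. x (vs ! j))" for x :: "'a \<Rightarrow> bit"
  have nth: "bij_betw ((!) vs) {..<n} S"
    unfolding vs_def n_def using fin by (intro bij_betw_nth) simp_all
  have N: "N \<in> carrier_mat n n"
    unfolding N_def closed_adj_matrix_def Let_def vs_def n_def by simp
  have kernel_iff: "to_vec x \<in> mat_kernel N \<longleftrightarrow> (\<forall>a\<in>S. sum x (closed_nbhd S E a) = 0)" for x
    unfolding to_vec_def N_def n_def vs_def using mem_mat_kernel_closed_adj_matrix_iff[OF fin] .
  have "bij_betw to_vec (null_space S E) (mat_kernel N)"
  proof (rule bij_betw_imageI)
    show "inj_on to_vec (null_space S E)"
    proof (rule inj_onI, rule ext)
      fix x y a
      assume "x \<in> null_space S E" "y \<in> null_space S E" "to_vec x = to_vec y"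
      then show "x a = y a"
        using nth unfolding null_space_def to_vec_def bij_betw_def
        by (cases "a \<in> S") (auto simp: vec_eq_iff)
    qed
    show "to_vec ` null_space S E = mat_kernel N"
    proof (intro equalityI subsetI)
      fix v assume v: "v \<in> mat_kernel N"
      define x where "x a = (if a \<in> S then v $ the_inv_into {..<n} ((!) vs) a else 0)" for a
      have "to_vec x = v"
        using v N the_inv_into_f_f[OF bij_betw_imp_inj_on[OF nth]] bij_betw_apply[OF nth]
        unfolding to_vec_def x_def mat_kernel_def by (auto simp: vec_eq_iff)
      moreover have "x \<in> null_space S E"
        using kernel_iff[of x] v \<open>to_vec x = v\<close> unfolding null_space_def x_def by auto
      ultimately show "v \<in> to_vec ` null_space S E"
        by blast
    qed (use kernel_iff in \<open>auto simp: null_space_def\<close>)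
  qed
  then show ?thesis
    unfolding to_vec_def n_def N_def .
qed

lemma card_null_space:
  fixes S :: "'a::linorder set"
  assumes "finite S"
  shows "card (null_space S E) = 2 ^ nullity S E"
proof -
  have "card (null_space S E) = card (mat_kernel (closed_adj_matrix S E))"
    using bij_betw_null_space_mat_kernel[OF assms] by (rule bij_betw_same_card)
  also have "\<dots> = 2 ^ nullity S E"
    using card_mat_kernel[of "closed_adj_matrix S E" "card S" "card S"]
    unfolding nullity_def closed_adj_matrix_def Let_def UNIV_bit by (simp add: numeral_2_eq_2)
  finally show ?thesis .
qed

lemma null_space_zero_outside: "x \<in> null_space S E \<Longrightarrow> a \<notin> S \<Longrightarrow> x a = 0"
  unfolding null_space_def by simp

lemma null_space_add:
  "x \<in> null_space S E \<Longrightarrow> y \<in> null_space S E \<Longrightarrow> (\<lambda>a. x a + y a) \<in> null_space S E"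
  unfolding null_space_def by (simp add: sum.distrib)

lemma null_space_zero: "(\<lambda>_. 0) \<in> null_space S E"
  unfolding null_space_def by simp

lemma null_space_smult: "x \<in> null_space S E \<Longrightarrow> (\<lambda>a. c * x a) \<in> null_space S E"
  unfolding null_space_def by (simp add: sum_distrib_left[symmetric])

lemma finite_null_space: "finite (S :: 'a::linorder set) \<Longrightarrow> finite (null_space S E)"
  using card_null_space[of S E] by (metis card.infinite power_not_zero zero_neq_numeral)

lemma null_space_nonzero:
  fixes S :: "'a::linorder set"
  assumes "finite S" and "nullity S E \<noteq> 0"
  shows "\<exists>x\<in>null_space S E. \<exists>a\<in>S. x a = 1"
proof (rule ccontr)
  assume none: "\<not> ?thesis"
  have "null_space S E \<subseteq> {\<lambda>_. 0}"
  proof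
    fix x assume x: "x \<in> null_space S E"
    have "x a = 0" for a
    proof (cases "a \<in> S")
      case True
      then have "x a \<noteq> 1"
        using none x by blast
      then show ?thesis
        by simp
    next
      case False
      then show ?thesis
        by (rule null_space_zero_outside[OF x])
    qed
    then show "x \<in> {\<lambda>_. 0}"
      by auto
  qed
  then have "card (null_space S E) \<le> card {\<lambda>_::'a. 0 :: bit}"
    by (intro card_mono) simp_all
  then have "card (null_space S E) \<le> 1"
    by simp
  moreover have "(2::nat) \<le> 2 ^ nullity S E"
    using assms(2) by (cases "nullity S E") auto
  ultimately show False
    using card_null_space[OF assms(1)] by simp
qed

lemma null_space_neighbour:
  assumes x: "x \<in> null_space S E" and a: "a \<in> S" "x a = 1" and fin: "finite S"
  shows "\<exists>b\<in>S. E a b \<and> x b = 1"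
proof (rule ccontr)
  assume none: "\<not> ?thesis"
  have "sum x (closed_nbhd S E a) = sum x {a}"
    using none a fin unfolding closed_nbhd_def by (intro sum.mono_neutral_right) auto
  then show False
    using x a unfolding null_space_def by simp
qed

text \<open>The closed adjacency matrix of a graph is symmetric, so its kernel is orthogonal to its image.\<close>
lemma null_space_orthogonal_image:
  assumes fin: "finite S" and symmetric: "\<And>a b. a \<in> S \<Longrightarrow> b \<in> S \<Longrightarrow> E a b \<Longrightarrow> E b a"
    and y: "y \<in> null_space S E"
  shows "(\<Sum>a\<in>S. y a * sum z (closed_nbhd S E a)) = 0"
proof -
  have adj_sym: "(b = a \<or> E a b) \<longleftrightarrow> (a = b \<or> E b a)" if "a \<in> S" "b \<in> S" for a b
    using symmetric that by blast
  have "(\<Sum>a\<in>S. y a * sum z (closed_nbhd S E a))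
      = (\<Sum>a\<in>S. \<Sum>b\<in>S. if b = a \<or> E a b then y a * z b else 0)"
    by (auto simp: sum_closed_nbhd_eq[OF fin] sum_distrib_left intro!: sum.cong)
  also have "\<dots> = (\<Sum>b\<in>S. \<Sum>a\<in>S. if a = b \<or> E b a then z b * y a else 0)"
    by (subst sum.swap) (auto simp: adj_sym mult.commute intro!: sum.cong)
  also have "\<dots> = (\<Sum>b\<in>S. z b * sum y (closed_nbhd S E b))"
    by (auto simp: sum_closed_nbhd_eq[OF fin] sum_distrib_left intro!: sum.cong)
  also have "\<dots> = 0"
    using y unfolding null_space_def by simp
  finally show ?thesis .
qed

lemma card_add_closed_eq_double_hyperplane:
  fixes K :: "('b \<Rightarrow> bit) set"
  assumes fin: "finite K" and add: "\<And>x y. x \<in> K \<Longrightarrow> y \<in> K \<Longrightarrow> (\<lambda>a. x a + y a) \<in> K"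
    and z: "z \<in> K" "z u = 1"
  shows "card K = 2 * card {x \<in> K. x u = 0}"
proof -
  let ?H = "{x \<in> K. x u = 0}"
  have "bij_betw (\<lambda>x a. x a + z a) ?H (K - ?H)"
  proof (rule bij_betw_byWitness[where f' = "\<lambda>x a. x a + z a"])
    show "(\<lambda>x a. x a + z a) ` ?H \<subseteq> K - ?H" and "(\<lambda>x a. x a + z a) ` (K - ?H) \<subseteq> ?H"
      using add z by auto
  qed (simp_all add: add.assoc)
  then have "card (K - ?H) = card ?H"
    by (simp add: bij_betw_same_card)
  moreover have "card K = card ?H + card (K - ?H)"
    using fin by (simp add: card_Diff_subset card_mono)
  ultimately show ?thesis
    by simp
qed

lemma card_add_closed_le_double_hyperplane:
  fixes K :: "('b \<Rightarrow> bit) set"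
  assumes "finite K" and "\<And>x y. x \<in> K \<Longrightarrow> y \<in> K \<Longrightarrow> (\<lambda>a. x a + y a) \<in> K"
  shows "card K \<le> 2 * card {x \<in> K. x u = 0}"
proof (cases "\<exists>z\<in>K. z u = 1")
  case True
  then obtain z where "z \<in> K" "z u = 1"
    by blast
  from card_add_closed_eq_double_hyperplane[OF assms this] show ?thesis
    by linarith
next
  case False
  then have "{x \<in> K. x u = 0} = K"
    by auto
  then show ?thesis
    by simp
qed

lemma inj_on_add_null_spaces:
  assumes "S \<inter> T = {}"
  shows "inj_on (\<lambda>(x, y) a. x a + y a) (null_space S E \<times> null_space T E)"
proof (rule inj_onI, clarify)
  fix x y x' y'
  assume x: "x \<in> null_space S E" "x' \<in> null_space S E" and y: "y \<in> null_space T E" "y' \<in> null_space T E"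
    and eq: "(\<lambda>a. x a + y a) = (\<lambda>a. x' a + y' a)"
  have "x a = x' a \<and> y a = y' a" for a
    using fun_cong[OF eq, of a] assms null_space_zero_outside[OF x(1)] null_space_zero_outside[OF x(2)]
      null_space_zero_outside[OF y(1)] null_space_zero_outside[OF y(2)]
    by (cases "a \<in> S") (auto simp: disjoint_iff)
  then show "x = x' \<and> y = y'"
    by auto
qed

definition restrict_zero :: "'a set \<Rightarrow> ('a \<Rightarrow> bit) \<Rightarrow> 'a \<Rightarrow> bit" where
  "restrict_zero S x a = (if a \<in> S then x a else 0)"

lemma sum_restrict_zero: "T \<subseteq> S \<Longrightarrow> sum (restrict_zero S x) T = sum x T"
  unfolding restrict_zero_def by (intro sum.cong) auto

section \<open>Two graphs joined by a bridge\<close>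

locale bridged_graphs =
  fixes V1 V2 :: "'a::linorder set" and E :: "'a \<Rightarrow> 'a \<Rightarrow> bool" and u v :: 'a
  assumes finite1: "finite V1" and finite2: "finite V2" and disjoint: "V1 \<inter> V2 = {}"
    and u_in: "u \<in> V1" and v_in: "v \<in> V2"
    and edge_sym: "\<And>a b. a \<in> V1 \<union> V2 \<Longrightarrow> b \<in> V1 \<union> V2 \<Longrightarrow> E a b \<Longrightarrow> E b a"
    and bridge: "\<And>a b. a \<in> V1 \<Longrightarrow> b \<in> V2 \<Longrightarrow> E a b \<longleftrightarrow> a = u \<and> b = v"
begin

lemma finite_Un: "finite (V1 \<union> V2)"
  using finite1 finite2 by simp

lemma swap: "bridged_graphs V2 V1 E v u"
proof
  show "E a b \<longleftrightarrow> a = v \<and> b = u" if "a \<in> V2" "b \<in> V1" for a b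
    using bridge[OF that(2,1)] edge_sym that by blast
qed (use finite1 finite2 disjoint u_in v_in edge_sym in blast)+

lemma closed_nbhd_Un: "a \<in> V1 \<Longrightarrow> closed_nbhd (V1 \<union> V2) E a = closed_nbhd V1 E a \<union> {b \<in> V2. E a b}"
  unfolding closed_nbhd_def using disjoint by auto

lemma neighbours_across_bridge: "a \<in> V1 \<Longrightarrow> {b \<in> V2. E a b} = (if a = u then {v} else {})"
  using bridge v_in by auto

lemma sum_closed_nbhd_Un_V1:
  assumes a: "a \<in> V1"
  shows "sum x (closed_nbhd (V1 \<union> V2) E a) = sum x (closed_nbhd V1 E a) + (if a = u then x v else 0)"
proof -
  have "closed_nbhd V1 E a \<inter> {b \<in> V2. E a b} = {}"
    using closed_nbhd_subset[of V1 E a] disjoint by blast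
  then have "sum x (closed_nbhd (V1 \<union> V2) E a) = sum x (closed_nbhd V1 E a) + sum x {b \<in> V2. E a b}"
    unfolding closed_nbhd_Un[OF a] using finite_closed_nbhd[OF finite1] finite2
    by (simp add: sum.union_disjoint)
  then show ?thesis
    unfolding neighbours_across_bridge[OF a] by simp
qed

lemma sum_closed_nbhd_Un_V2:
  "a \<in> V2 \<Longrightarrow> sum x (closed_nbhd (V1 \<union> V2) E a) = sum x (closed_nbhd V2 E a) + (if a = v then x u else 0)"
  using bridged_graphs.sum_closed_nbhd_Un_V1[OF swap, of a x] by (simp only: Un_commute)

lemma null_space_Un_iff:
  "x \<in> null_space (V1 \<union> V2) E \<longleftrightarrow> (\<forall>a. a \<notin> V1 \<union> V2 \<longrightarrow> x a = 0) \<and>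
     (\<forall>a\<in>V1. sum x (closed_nbhd V1 E a) = (if a = u then x v else 0)) \<and>
     (\<forall>a\<in>V2. sum x (closed_nbhd V2 E a) = (if a = v then x u else 0))"
proof -
  have "sum x (closed_nbhd (V1 \<union> V2) E a) = 0 \<longleftrightarrow>
      sum x (closed_nbhd V1 E a) = (if a = u then x v else 0)" if "a \<in> V1" for a
    unfolding sum_closed_nbhd_Un_V1[OF that] by (simp add: bit_add_eq_0_iff)
  moreover have "sum x (closed_nbhd (V1 \<union> V2) E a) = 0 \<longleftrightarrow>
      sum x (closed_nbhd V2 E a) = (if a = v then x u else 0)" if "a \<in> V2" for a
    unfolding sum_closed_nbhd_Un_V2[OF that] by (simp add: bit_add_eq_0_iff)
  ultimately show ?thesis
    unfolding null_space_def ball_Un by blast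
qed

lemma null_space_extend:
  assumes y: "y \<in> null_space V1 E" and yu: "y u = 0"
  shows "y \<in> null_space (V1 \<union> V2) E"
proof -
  have zero2: "y a = 0" if "a \<in> V2" for a
    using null_space_zero_outside[OF y] disjoint that by blast
  then have "sum y (closed_nbhd V2 E a) = 0" for a
    using closed_nbhd_subset[of V2 E a] by (intro sum.neutral) blast
  then show ?thesis
    using y[unfolded null_space_def] yu zero2[OF v_in] unfolding null_space_Un_iff by simp
qed

lemma sum_restrict_zero_closed_nbhd:
  assumes "x \<in> null_space (V1 \<union> V2) E" and "a \<in> V1"
  shows "sum (restrict_zero V1 x) (closed_nbhd V1 E a) = (if a = u then x v else 0)"
proof -
  have "sum x (closed_nbhd V1 E a) = (if a = u then x v else 0)"
    using assms unfolding null_space_Un_iff by blast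
  then show ?thesis
    by (simp only: sum_restrict_zero[OF closed_nbhd_subset])
qed

lemma restrict_zero_in_null_space:
  assumes "x \<in> null_space (V1 \<union> V2) E" and "x v = 0"
  shows "restrict_zero V1 x \<in> null_space V1 E"
  using sum_restrict_zero_closed_nbhd[OF assms(1)] assms(2)
  unfolding null_space_def by (simp add: restrict_zero_def)

lemma null_space_vanishes_at_bridge:
  assumes z: "z \<in> null_space (V1 \<union> V2) E" "z v = 1" and y: "y \<in> null_space V1 E"
  shows "y u = 0"
proof -
  have "0 = (\<Sum>a\<in>V1. y a * sum (restrict_zero V1 z) (closed_nbhd V1 E a))"
    using null_space_orthogonal_image[OF finite1 _ y] edge_sym by (metis UnCI)
  also have "\<dots> = (\<Sum>a\<in>V1. if a = u then y a else 0)"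
    using sum_restrict_zero_closed_nbhd[OF z(1)] z(2) by (intro sum.cong) auto
  also have "\<dots> = y u"
    using finite1 u_in by simp
  finally show ?thesis ..
qed

lemma card_null_space_Un_ge:
  assumes z: "z \<in> null_space (V1 \<union> V2) E" "z u = 1" "z v = 1"
  shows "2 * (card (null_space V1 E) * card (null_space V2 E)) \<le> card (null_space (V1 \<union> V2) E)"
proof -
  let ?K = "null_space (V1 \<union> V2) E"
  let ?H = "{x \<in> ?K. x u = 0}"
  have vanish_u: "y u = 0" if "y \<in> null_space V1 E" for y
    using null_space_vanishes_at_bridge[OF z(1,3) that] .
  have "z \<in> null_space (V2 \<union> V1) E"
    using z(1) by (simp add: Un_commute)
  then have vanish_v: "y v = 0" if "y \<in> null_space V2 E" for y
    using bridged_graphs.null_space_vanishes_at_bridge[OF swap, of z y] z(2) that by blast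
  have "(\<lambda>a. y1 a + y2 a) \<in> ?H" if y1: "y1 \<in> null_space V1 E" and y2: "y2 \<in> null_space V2 E"
    for y1 y2
  proof -
    have "y1 \<in> ?K"
      using null_space_extend[OF y1 vanish_u[OF y1]] .
    moreover have "y2 \<in> ?K"
      using bridged_graphs.null_space_extend[OF swap y2 vanish_v[OF y2]] by (simp add: Un_commute)
    moreover have "y2 u = 0"
      using null_space_zero_outside[OF y2] disjoint u_in by blast
    ultimately show ?thesis
      using null_space_add vanish_u[OF y1] by simp
  qed
  then have "(\<lambda>(y1, y2) a. y1 a + y2 a) ` (null_space V1 E \<times> null_space V2 E) \<subseteq> ?H"
    by auto
  moreover have "finite ?H"
    using finite_null_space[OF finite_Un] by simp
  ultimately have "card (null_space V1 E \<times> null_space V2 E) \<le> card ?H"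
    by (rule card_inj_on_le[OF inj_on_add_null_spaces[OF disjoint]])
  moreover have "card ?K = 2 * card ?H"
    using card_add_closed_eq_double_hyperplane[OF finite_null_space[OF finite_Un] _ z(1,2)]
      null_space_add by blast
  ultimately show ?thesis
    by (simp add: card_cartesian_product)
qed

text \<open>The map x \<mapsto> (x + x(v) x0 on V1, x on V2): adding x(v) x0 kills the value at v,
  so the first component lies in the kernel of V1.\<close>
lemma card_null_space_Un_vanishing_le:
  assumes x0: "x0 \<in> null_space (V1 \<union> V2) E" "x0 u = 0"
    and x0v: "\<And>x. x \<in> null_space (V1 \<union> V2) E \<Longrightarrow> x u = 0 \<Longrightarrow> x v = 1 \<Longrightarrow> x0 v = 1"
  shows "card {x \<in> null_space (V1 \<union> V2) E. x u = 0} \<le> card (null_space V1 E) * card (null_space V2 E)"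
proof -
  let ?H = "{x \<in> null_space (V1 \<union> V2) E. x u = 0}"
  define h where "h x = (restrict_zero V1 (\<lambda>a. x a + x v * x0 a), restrict_zero V2 x)" for x
  have img: "h ` ?H \<subseteq> null_space V1 E \<times> null_space V2 E"
  proof (rule image_subsetI)
    fix x assume x: "x \<in> ?H"
    have "(\<lambda>a. x a + x v * x0 a) \<in> null_space (V1 \<union> V2) E"
      using x x0 null_space_add null_space_smult by blast
    moreover have "x v + x v * x0 v = 0"
      using x0v[of x] x by (cases "x v") simp_all
    moreover have "x \<in> null_space (V2 \<union> V1) E" "x u = 0"
      using x by (simp_all add: Un_commute)
    ultimately show "h x \<in> null_space V1 E \<times> null_space V2 E"
      unfolding h_def using restrict_zero_in_null_space bridged_graphs.restrict_zero_in_null_space[OF swap]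
      by simp
  qed
  have "inj_on h ?H"
  proof (rule inj_onI, rule ext)
    fix x y a
    assume x: "x \<in> ?H" and y: "y \<in> ?H" and eq: "h x = h y"
    then have eq1: "restrict_zero V1 (\<lambda>a. x a + x v * x0 a) = restrict_zero V1 (\<lambda>a. y a + y v * x0 a)"
      and eq2: "restrict_zero V2 x = restrict_zero V2 y"
      unfolding h_def by simp_all
    have on_V2: "x b = y b" if "b \<in> V2" for b
      using fun_cong[OF eq2, of b] that unfolding restrict_zero_def by simp
    show "x a = y a"
    proof (cases "a \<in> V1")
      case True
      then show ?thesis
        using fun_cong[OF eq1, of a] on_V2[OF v_in] unfolding restrict_zero_def by simp
    next
      case False
      then show ?thesis
        using on_V2 null_space_zero_outside[of x "V1 \<union> V2" E a] null_space_zero_outside[of y "V1 \<union> V2" E a] x y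
        by (cases "a \<in> V2") simp_all
    qed
  qed
  then have "card ?H \<le> card (null_space V1 E \<times> null_space V2 E)"
    using img finite_null_space[OF finite1] finite_null_space[OF finite2]
    by (intro card_inj_on_le) auto
  then show ?thesis
    by (simp add: card_cartesian_product)
qed

lemma card_null_space_Un_le:
  "card (null_space (V1 \<union> V2) E) \<le> 2 * (card (null_space V1 E) * card (null_space V2 E))"
proof -
  let ?K = "null_space (V1 \<union> V2) E"
  let ?H = "{x \<in> ?K. x u = 0}"
  obtain x0 where "x0 \<in> ?K" "x0 u = 0" "\<And>x. x \<in> ?K \<Longrightarrow> x u = 0 \<Longrightarrow> x v = 1 \<Longrightarrow> x0 v = 1"
  proof (cases "\<exists>x\<in>?H. x v = 1")
    case True
    then show ?thesis
      using that by blast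
  next
    case False
    show ?thesis
    proof (rule that)
      show "(\<lambda>_. 0) \<in> ?K" "(\<lambda>_. 0 :: bit) u = 0"
        using null_space_zero by simp_all
      show "(\<lambda>_. 0 :: bit) v = 1" if "x \<in> ?K" "x u = 0" "x v = 1" for x
        using False that by blast
    qed
  qed
  then have "card ?H \<le> card (null_space V1 E) * card (null_space V2 E)"
    by (rule card_null_space_Un_vanishing_le)
  moreover have "card ?K \<le> 2 * card ?H"
    using card_add_closed_le_double_hyperplane[OF finite_null_space[OF finite_Un]] null_space_add
    by blast
  ultimately show ?thesis
    by simp
qed

lemma nullity_Un_le: "nullity (V1 \<union> V2) E \<le> nullity V1 E + nullity V2 E + 1"
proof -
  have "(2::nat) ^ nullity (V1 \<union> V2) E \<le> 2 ^ (nullity V1 E + nullity V2 E + 1)"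
    using card_null_space_Un_le finite1 finite2 finite_Un by (simp add: card_null_space power_add)
  then show ?thesis
    by (rule power_le_imp_le_exp[rotated]) simp
qed

lemma nullity_Un_eq:
  assumes "z \<in> null_space (V1 \<union> V2) E" "z u = 1" "z v = 1"
  shows "nullity (V1 \<union> V2) E = nullity V1 E + nullity V2 E + 1"
proof -
  have "(2::nat) ^ (nullity V1 E + nullity V2 E + 1) \<le> 2 ^ nullity (V1 \<union> V2) E"
    using card_null_space_Un_ge[OF assms] finite1 finite2 finite_Un by (simp add: card_null_space power_add)
  then have "nullity V1 E + nullity V2 E + 1 \<le> nullity (V1 \<union> V2) E"
    by (rule power_le_imp_le_exp[rotated]) simp
  with nullity_Un_le show ?thesis
    by simp
qed

end

section \<open>Partitions into always solvable subtrees\<close>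

lemma AS_partitionI:
  assumes "finite P" and "\<Union>P = V" and "\<And>A B. A \<in> P \<Longrightarrow> B \<in> P \<Longrightarrow> A \<noteq> B \<Longrightarrow> A \<inter> B = {}"
    and "\<And>A. A \<in> P \<Longrightarrow> connected_graph A E" and "\<And>A. A \<in> P \<Longrightarrow> always_solvable A E"
  shows "AS_partition V E P"
  using assms unfolding AS_partition_def by blast

lemma AS_partitionD:
  assumes "AS_partition V E P"
  shows "finite P" and "\<Union>P = V" and "\<And>A B. A \<in> P \<Longrightarrow> B \<in> P \<Longrightarrow> A \<noteq> B \<Longrightarrow> A \<inter> B = {}"
    and "\<And>A. A \<in> P \<Longrightarrow> connected_graph A E" and "\<And>A. A \<in> P \<Longrightarrow> always_solvable A E"
  using assms unfolding AS_partition_def by blast+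

lemma AS_partition_part_nonempty: "AS_partition V E P \<Longrightarrow> C \<in> P \<Longrightarrow> C \<noteq> {}"
  using AS_partitionD(4) unfolding connected_graph_def by blast

lemma AS_partition_trivial:
  assumes P: "AS_partition V E P" and "V \<in> P"
  shows "P = {V}"
proof -
  have "C = V" if "C \<in> P" for C
  proof (rule ccontr)
    assume "C \<noteq> V"
    then have "C = {}"
      using AS_partitionD(2,3)[OF P] that assms(2) by blast
    then show False
      using AS_partition_part_nonempty[OF P that] by contradiction
  qed
  then show ?thesis
    using assms(2) by blast
qed

lemma AS_partition_Un:
  assumes P1: "AS_partition V1 E P1" and P2: "AS_partition V2 E P2" and disj: "V1 \<inter> V2 = {}"
  shows "AS_partition (V1 \<union> V2) E (P1 \<union> P2)"
proof (rule AS_partitionI)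
  show "finite (P1 \<union> P2)" "\<Union> (P1 \<union> P2) = V1 \<union> V2"
    using AS_partitionD(1,2)[OF P1] AS_partitionD(1,2)[OF P2] by auto
  show "connected_graph A E" "always_solvable A E" if "A \<in> P1 \<union> P2" for A
    using AS_partitionD(4,5)[OF P1] AS_partitionD(4,5)[OF P2] that by blast+
  show "A \<inter> B = {}" if "A \<in> P1 \<union> P2" "B \<in> P1 \<union> P2" "A \<noteq> B" for A B
  proof -
    have "A \<subseteq> V1 \<and> B \<subseteq> V2 \<or> A \<subseteq> V2 \<and> B \<subseteq> V1 \<or> A \<inter> B = {}"
      using AS_partitionD(2,3)[OF P1] AS_partitionD(2,3)[OF P2] that by blast
    then show ?thesis
      using disj by blast
  qed
qed

lemma AS_partition_restrict:
  assumes P: "AS_partition (V1 \<union> V2) E P" and disj: "V1 \<inter> V2 = {}"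
    and sides: "\<And>C. C \<in> P \<Longrightarrow> C \<subseteq> V1 \<or> C \<subseteq> V2"
  shows "AS_partition V1 E {C \<in> P. C \<subseteq> V1}"
proof (rule AS_partitionI)
  show "finite {C \<in> P. C \<subseteq> V1}"
    using AS_partitionD(1)[OF P] by simp
  show "\<Union>{C \<in> P. C \<subseteq> V1} = V1"
  proof
    show "V1 \<subseteq> \<Union>{C \<in> P. C \<subseteq> V1}"
    proof
      fix x assume "x \<in> V1"
      then obtain C where "C \<in> P" "x \<in> C"
        using AS_partitionD(2)[OF P] by blast
      moreover from this have "\<not> C \<subseteq> V2"
        using \<open>x \<in> V1\<close> disj by blast
      ultimately show "x \<in> \<Union>{C \<in> P. C \<subseteq> V1}"
        using sides by blast
    qed
  qed blast
qed (use AS_partitionD(3-5)[OF P] in blast)+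

lemma card_AS_partition_split:
  assumes P: "AS_partition (V1 \<union> V2) E P" and disj: "V1 \<inter> V2 = {}"
    and sides: "\<And>C. C \<in> P \<Longrightarrow> C \<subseteq> V1 \<or> C \<subseteq> V2"
  shows "card P = card {C \<in> P. C \<subseteq> V1} + card {C \<in> P. C \<subseteq> V2}"
proof -
  have "P = {C \<in> P. C \<subseteq> V1} \<union> {C \<in> P. C \<subseteq> V2}"
    using sides by blast
  moreover have "{C \<in> P. C \<subseteq> V1} \<inter> {C \<in> P. C \<subseteq> V2} = {}"
    using AS_partition_part_nonempty[OF P] disj by blast
  ultimately show ?thesis
    using AS_partitionD(1)[OF P] by (metis card_Un_disjoint finite_Un)
qed

section \<open>Cutting a tree at an edge\<close>

lemma is_cycle_mono: "is_cycle S E xs \<Longrightarrow> S \<subseteq> T \<Longrightarrow> is_cycle T E xs"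
  unfolding is_cycle_def by auto

lemma tree_subset: "tree V E \<Longrightarrow> S \<subseteq> V \<Longrightarrow> connected_graph S E \<Longrightarrow> tree S E"
  unfolding tree_def using is_cycle_mono by blast

lemma simple_graph_subset: "simple_graph V E \<Longrightarrow> S \<subseteq> V \<Longrightarrow> simple_graph S E"
  unfolding simple_graph_def by (auto intro: finite_subset)

lemma rtranclp_crossing:
  assumes "r\<^sup>*\<^sup>* x y" "P x" "\<not> P y"
  shows "\<exists>a b. r a b \<and> P a \<and> \<not> P b"
  using assms by (induct rule: rtranclp_induct) auto

lemma connected_graph_edge_leaving:
  assumes "connected_graph V E" and "A \<subseteq> V" and "c \<in> A" and "d \<in> V - A"
  obtains a b where "a \<in> A" "b \<in> V - A" "E a b"
proof -
  have "(\<lambda>x y. x \<in> V \<and> y \<in> V \<and> E x y)\<^sup>*\<^sup>* c d"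
    using assms unfolding connected_graph_def by blast
  then show thesis
    using rtranclp_crossing[where P = "\<lambda>x. x \<in> A"] assms(3,4) that by blast
qed

lemma is_cycle_of_path:
  assumes path: "rtrancl_path R u xs v" and "distinct (u # xs)" and "2 \<le> length xs"
    and R: "\<And>a b. R a b \<Longrightarrow> a \<in> S \<and> b \<in> S \<and> E a b" and "u \<in> S" and "E v u"
  shows "is_cycle S E (u # xs)"
proof -
  have step: "R ((u # xs) ! i) (xs ! i)" if "i < length xs" for i
    using rtrancl_path_nth[OF path that] .
  have "xs \<noteq> []"
    using assms(3) by auto
  then have "last xs = v"
    using rtrancl_path_last[OF path] by blast
  moreover have "set xs \<subseteq> S"
  proof
    fix a assume "a \<in> set xs"
    then obtain i where "i < length xs" "xs ! i = a"
      by (auto simp: in_set_conv_nth)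
    then show "a \<in> S"
      using step R by blast
  qed
  ultimately show ?thesis
    unfolding is_cycle_def using assms step R by auto
qed

locale tree_edge =
  fixes V :: "'a::linorder set" and E :: "'a \<Rightarrow> 'a \<Rightarrow> bool" and u v :: 'a
  assumes simple: "simple_graph V E" and tree: "tree V E"
    and u_in: "u \<in> V" and v_in: "v \<in> V" and edge: "E u v"
begin

definition cut :: "'a \<Rightarrow> 'a \<Rightarrow> bool" where
  "cut a b \<longleftrightarrow> a \<in> V \<and> b \<in> V \<and> E a b \<and> {a, b} \<noteq> {u, v}"

definition side :: "'a \<Rightarrow> 'a set" where
  "side w = {a. cut\<^sup>*\<^sup>* w a}"

lemma edge_sym: "a \<in> V \<Longrightarrow> b \<in> V \<Longrightarrow> E a b \<Longrightarrow> E b a"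
  using simple unfolding simple_graph_def by blast

lemma swap: "tree_edge V E v u"
proof
  show "E v u"
    using edge_sym u_in v_in edge by blast
qed (use simple tree u_in v_in in blast)+

lemma side_swap: "tree_edge.side V E v u = side"
proof -
  have "tree_edge.cut V E v u = cut"
    unfolding tree_edge.cut_def[OF swap] cut_def by (auto simp: fun_eq_iff insert_commute)
  then show ?thesis
    unfolding tree_edge.side_def[OF swap] side_def by simp
qed

lemma symp_cut: "symp cut"
  unfolding cut_def by (intro sympI) (metis edge_sym insert_commute)

lemma self_in_side: "w \<in> side w"
  unfolding side_def by simp

lemma side_step: "a \<in> side w \<Longrightarrow> cut a b \<Longrightarrow> b \<in> side w"
  unfolding side_def by (simp add: rtranclp.rtrancl_into_rtrancl)

lemma side_subset: "w \<in> V \<Longrightarrow> side w \<subseteq> V"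
proof
  fix a assume "w \<in> V" "a \<in> side w"
  then have "cut\<^sup>*\<^sup>* w a"
    unfolding side_def by simp
  then show "a \<in> V"
    using \<open>w \<in> V\<close> by (induct rule: rtranclp_induct) (auto simp: cut_def)
qed

lemma connected_side:
  assumes w: "w \<in> V"
  shows "connected_graph (side w) E"
proof -
  let ?R = "\<lambda>a b. a \<in> side w \<and> b \<in> side w \<and> E a b"
  have walk: "?R\<^sup>*\<^sup>* w a" if "a \<in> side w" for a
  proof -
    have "cut\<^sup>*\<^sup>* w a"
      using that unfolding side_def by simp
    then show ?thesis
    proof (induct rule: rtranclp_induct)
      case (step b c)
      then have "b \<in> side w" "c \<in> side w"
        unfolding side_def by (auto intro: rtranclp.rtrancl_into_rtrancl)
      then have "?R b c"
        using step(2) unfolding cut_def by simp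
      with step(3) show ?case
        by (rule rtranclp.rtrancl_into_rtrancl)
    qed simp
  qed
  have sym_R: "symp ?R"
    using edge_sym side_subset[OF w] by (intro sympI) blast
  have "?R\<^sup>*\<^sup>* a b" if "a \<in> side w" "b \<in> side w" for a b
    using sympD[OF symp_rtranclp, OF sym_R walk[OF that(1)]] walk[OF that(2)]
    by (rule rtranclp_trans)
  then show ?thesis
    unfolding connected_graph_def using self_in_side by blast
qed

lemma v_notin_side_u: "v \<notin> side u"
proof
  assume "v \<in> side u"
  then obtain xs0 where "rtrancl_path cut u xs0 v"
    unfolding side_def rtranclp_eq_rtrancl_path by blast
  then obtain xs where path: "rtrancl_path cut u xs v" and dist: "distinct (u # xs)"
    by (rule rtrancl_path_distinct)
  have "u \<noteq> v"
    using simple u_in edge unfolding simple_graph_def by blast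
  then have "xs \<noteq> []"
    using path rtrancl_path.cases by fastforce
  moreover have "xs \<noteq> [v]"
    using rtrancl_path_nth[OF path, of 0] unfolding cut_def by auto
  moreover have "last xs = v"
    using rtrancl_path_last[OF path] \<open>xs \<noteq> []\<close> .
  ultimately have "2 \<le> length xs"
    by (cases xs rule: rev_cases) (auto simp: Suc_le_eq)
  then have "is_cycle V E (u # xs)"
    using is_cycle_of_path[OF path dist] u_in edge_sym[OF u_in v_in edge] unfolding cut_def by blast
  then show False
    using tree unfolding tree_def by blast
qed

lemma u_notin_side_v: "u \<notin> side v"
  using tree_edge.v_notin_side_u[OF swap] unfolding side_swap .

lemma sides_disjoint: "side u \<inter> side v = {}"
proof (rule ccontr)
  assume "side u \<inter> side v \<noteq> {}"
  then obtain a where ua: "cut\<^sup>*\<^sup>* u a" and va: "cut\<^sup>*\<^sup>* v a"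
    unfolding side_def by blast
  have "cut\<^sup>*\<^sup>* u v"
    using ua sympD[OF symp_rtranclp[OF symp_cut] va] by (rule rtranclp_trans)
  then show False
    using v_notin_side_u unfolding side_def by simp
qed

lemma sides_Un: "side u \<union> side v = V"
proof
  show "side u \<union> side v \<subseteq> V"
    using side_subset u_in v_in by blast
  show "V \<subseteq> side u \<union> side v"
  proof
    fix a assume "a \<in> V"
    then have "(\<lambda>x y. x \<in> V \<and> y \<in> V \<and> E x y)\<^sup>*\<^sup>* u a"
      using tree u_in unfolding tree_def connected_graph_def by blast
    then show "a \<in> side u \<union> side v"
    proof (induct rule: rtranclp_induct)
      case (step b c)
      show ?case
      proof (cases "{b, c} = {u, v}")
        case True
        then show ?thesis
          using self_in_side by (auto simp: doubleton_eq_iff)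
      next
        case False
        then have "cut b c"
          using step(2) unfolding cut_def by simp
        then show ?thesis
          using step(3) side_step by blast
      qed
    qed (simp add: self_in_side)
  qed
qed

lemma crossing_edge:
  assumes "a \<in> side u" "b \<in> side v"
  shows "E a b \<longleftrightarrow> a = u \<and> b = v"
proof
  assume ab: "E a b"
  have "a \<in> V" "b \<in> V"
    using assms side_subset u_in v_in by blast+
  then have "\<not> cut a b"
    using side_step[OF assms(1)] assms(2) sides_disjoint by blast
  then have "{a, b} = {u, v}"
    using ab \<open>a \<in> V\<close> \<open>b \<in> V\<close> unfolding cut_def by blast
  then show "a = u \<and> b = v"
    using assms v_notin_side_u by (auto simp: doubleton_eq_iff)
qed (use edge in simp)

lemma tree_side: "w \<in> V \<Longrightarrow> tree (side w) E"
  using tree_subset[OF tree side_subset connected_side] .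

lemma simple_graph_side: "w \<in> V \<Longrightarrow> simple_graph (side w) E"
  using simple_graph_subset[OF simple side_subset] .

lemma bridged: "bridged_graphs (side u) (side v) E u v"
proof
  show "finite (side u)" "finite (side v)"
    using simple_graph_side u_in v_in unfolding simple_graph_def by blast+
  show "E a b \<longleftrightarrow> a = u \<and> b = v" if "a \<in> side u" "b \<in> side v" for a b
    using crossing_edge that .
  show "E b a" if "a \<in> side u \<union> side v" "b \<in> side u \<union> side v" "E a b" for a b
    using edge_sym that sides_Un by blast
qed (use sides_disjoint self_in_side in auto)

lemma card_sides_less: "card (side u) < card V" "card (side v) < card V"
proof -
  have "finite V"
    using simple unfolding simple_graph_def by simp
  moreover have "side u \<subset> V" "side v \<subset> V"
    using side_subset u_in v_in v_notin_side_u u_notin_side_v by blast+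
  ultimately show "card (side u) < card V" "card (side v) < card V"
    by (simp_all add: psubset_card_mono)
qed

lemma connected_subset_side:
  assumes C: "connected_graph C E" "C \<subseteq> V" and not_both: "\<not> (u \<in> C \<and> v \<in> C)"
  shows "C \<subseteq> side u \<or> C \<subseteq> side v"
proof (rule ccontr)
  assume "\<not> (C \<subseteq> side u \<or> C \<subseteq> side v)"
  then obtain c d where "c \<in> C" "c \<in> side u" "d \<in> C" "d \<notin> side u"
    using C(2) sides_Un by blast
  then have "(\<lambda>x y. x \<in> C \<and> y \<in> C \<and> E x y)\<^sup>*\<^sup>* c d"
    using C(1) unfolding connected_graph_def by blast
  then obtain a b where "a \<in> C" "b \<in> C" "E a b" "a \<in> side u" "b \<notin> side u"
    using rtranclp_crossing[where P = "\<lambda>x. x \<in> side u"] \<open>c \<in> side u\<close> \<open>d \<notin> side u\<close> by blast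
  moreover have "b \<in> side v"
    using \<open>b \<in> C\<close> \<open>b \<notin> side u\<close> C(2) sides_Un by blast
  ultimately show False
    using crossing_edge not_both by blast
qed

lemma AS_partition_sides:
  assumes P: "AS_partition V E P" and apart: "\<And>C. C \<in> P \<Longrightarrow> \<not> (u \<in> C \<and> v \<in> C)"
  shows "AS_partition (side u) E {C \<in> P. C \<subseteq> side u}"
    and "AS_partition (side v) E {C \<in> P. C \<subseteq> side v}"
    and "card P = card {C \<in> P. C \<subseteq> side u} + card {C \<in> P. C \<subseteq> side v}"
proof -
  have sides: "C \<subseteq> side u \<or> C \<subseteq> side v" if "C \<in> P" for C
  proof (rule connected_subset_side)
    show "connected_graph C E"
      using AS_partitionD(4)[OF P that] .
    show "C \<subseteq> V"
      using AS_partitionD(2)[OF P] that by blast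
  qed (use apart that in blast)
  have P': "AS_partition (side u \<union> side v) E P"
    using P by (simp only: sides_Un)
  show "AS_partition (side u) E {C \<in> P. C \<subseteq> side u}"
    using AS_partition_restrict[OF P' sides_disjoint sides] .
  show "card P = card {C \<in> P. C \<subseteq> side u} + card {C \<in> P. C \<subseteq> side v}"
    using card_AS_partition_split[OF P' sides_disjoint sides] .
  have "AS_partition (side v \<union> side u) E P"
    using P' by (simp only: Un_commute)
  moreover have "side v \<inter> side u = {}"
    using sides_disjoint by blast
  moreover have "C \<subseteq> side v \<or> C \<subseteq> side u" if "C \<in> P" for C
    using sides[OF that] by blast
  ultimately show "AS_partition (side v) E {C \<in> P. C \<subseteq> side v}"
    by (rule AS_partition_restrict)
qed

end

section \<open>Nullity and the partition number\<close>

lemma AS_partition_edge_leaving_part: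
  assumes P: "AS_partition V E P" and conn: "connected_graph V E" and "V \<notin> P"
  obtains A a b where "A \<in> P" "a \<in> A" "b \<in> V - A" "E a b"
proof -
  have "V \<noteq> {}"
    using conn unfolding connected_graph_def by simp
  then obtain A c where A: "A \<in> P" "c \<in> A"
    using AS_partitionD(2)[OF P] by blast
  have "A \<subseteq> V"
    using AS_partitionD(2)[OF P] A(1) by blast
  moreover have "A \<noteq> V"
    using A(1) assms(3) by blast
  ultimately obtain d where "d \<in> V - A"
    by blast
  with connected_graph_edge_leaving[OF conn \<open>A \<subseteq> V\<close> A(2)] that A(1) show thesis
    by blast
qed

lemma nullity_less_card_AS_partition:
  fixes V :: "'a::linorder set"
  assumes "simple_graph V E" and "tree V E" and "AS_partition V E P"
  shows "nullity V E < card P"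
  using assms
proof (induct "card V" arbitrary: V P rule: less_induct)
  case less
  have P: "AS_partition V E P"
    by fact
  show ?case
  proof (cases "V \<in> P")
    case True
    then have "P = {V}"
      using AS_partition_trivial[OF P] by blast
    moreover have "nullity V E = 0"
      using AS_partitionD(5)[OF P True] unfolding always_solvable_def .
    ultimately show ?thesis
      by simp
  next
    case False
    obtain A a b where ab: "A \<in> P" "a \<in> A" "b \<in> V - A" "E a b"
      using AS_partition_edge_leaving_part[OF P _ False] less.prems(2) unfolding tree_def by blast
    have "a \<in> V"
      using AS_partitionD(2)[OF P] ab(1,2) by blast
    then interpret tree_edge V E a b
      using less.prems(1,2) ab(3,4) by unfold_locales auto
    have "\<not> (a \<in> C \<and> b \<in> C)" if "C \<in> P" for C
      using AS_partitionD(3)[OF P that ab(1)] ab(2,3) by blast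
    note split = AS_partition_sides[OF P this]
    have "nullity (side a) E < card {C \<in> P. C \<subseteq> side a}"
      using less.hyps[OF card_sides_less(1) simple_graph_side tree_side split(1)] u_in by blast
    moreover have "nullity (side b) E < card {C \<in> P. C \<subseteq> side b}"
      using less.hyps[OF card_sides_less(2) simple_graph_side tree_side split(2)] v_in by blast
    moreover have "nullity V E \<le> nullity (side a) E + nullity (side b) E + 1"
      using bridged_graphs.nullity_Un_le[OF bridged] unfolding sides_Un .
    ultimately show ?thesis
      using split(3) by linarith
  qed
qed

lemma exists_AS_partition_card_le:
  fixes V :: "'a::linorder set"
  assumes "simple_graph V E" and "tree V E"
  shows "\<exists>P. AS_partition V E P \<and> card P \<le> nullity V E + 1"
  using assms
proof (induct "card V" arbitrary: V rule: less_induct)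
  case less
  have fin: "finite V"
    using less.prems(1) unfolding simple_graph_def by simp
  show ?case
  proof (cases "nullity V E = 0")
    case True
    then have "AS_partition V E {V}"
      using less.prems(2) unfolding tree_def by (intro AS_partitionI) (simp_all add: always_solvable_def)
    then show ?thesis
      by fastforce
  next
    case False
    obtain x a where x: "x \<in> null_space V E" and a: "a \<in> V" "x a = 1"
      using null_space_nonzero[OF fin False] by blast
    obtain b where b: "b \<in> V" "E a b" "x b = 1"
      using null_space_neighbour[OF x a fin] by blast
    interpret tree_edge V E a b
      using less.prems a b by unfold_locales
    obtain P1 where P1: "AS_partition (side a) E P1" "card P1 \<le> nullity (side a) E + 1"
      using less.hyps[OF card_sides_less(1)] simple_graph_side tree_side u_in by blast
    obtain P2 where P2: "AS_partition (side b) E P2" "card P2 \<le> nullity (side b) E + 1"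
      using less.hyps[OF card_sides_less(2)] simple_graph_side tree_side v_in by blast
    have "nullity V E = nullity (side a) E + nullity (side b) E + 1"
      using bridged_graphs.nullity_Un_eq[OF bridged] x a b unfolding sides_Un by blast
    moreover have "AS_partition V E (P1 \<union> P2)"
      using AS_partition_Un[OF P1(1) P2(1) sides_disjoint] unfolding sides_Un .
    moreover have "card (P1 \<union> P2) \<le> card P1 + card P2"
      by (rule card_Un_le)
    ultimately show ?thesis
      using P1(2) P2(2) by (intro exI[of _ "P1 \<union> P2"]) simp
  qed
qed

theorem theorem4p4:
  fixes V :: "'a::linorder set" and E :: "'a \<Rightarrow> 'a \<Rightarrow> bool"
  assumes "simple_graph V E" and "tree V E"
  shows "pi_partition V E = nullity V E + 1"
  unfolding pi_partition_def
proof (rule Least_equality)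
  obtain P where P: "AS_partition V E P" "card P \<le> nullity V E + 1"
    using exists_AS_partition_card_le[OF assms] by blast
  then have "card P = nullity V E + 1"
    using nullity_less_card_AS_partition[OF assms P(1)] by simp
  with P(1) show "\<exists>P. AS_partition V E P \<and> card P = nullity V E + 1"
    by blast
  show "nullity V E + 1 \<le> k" if "\<exists>P. AS_partition V E P \<and> card P = k" for k
    using that nullity_less_card_AS_partition[OF assms] by fastforce
qed

end
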